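(* Let $C$ be a smooth convex plane curve with no two parallel tangent lines, with its associated domain $D$ and area distance $f:D\to\mathbb{R}$ (defined in the context), and let $C(r)$ be a regular parameterization of $C$. For $p\in D$ denote by $C(u(p))$ and $C(v(p))$ the two extremities of the minimal chord $l(p)$, and regard $u$ and $v$ as (differentiable) functions of $p$. Then $$\nabla u=-\frac{2\,R\,C'(v)}{[C'(u),C'(v)]},\qquad \nabla v=\frac{2\,R\,C'(u)}{[C'(u),C'(v)]}.$$
   Context: $C$ may have $2$, $1$ or $0$ endpoints. $D$ is the plane region bounded by $C$ and by the image(s) of $C$ under the homothety of ratio $1/2$ centred at each endpoint of $C$. A chord is a line segment joining two points of $C$. For $p\in D$, each chord $l$ through $p$ bounds, together with $C$, a region $D_l$; $l(p)$ denotes the chord through $p$ for which the area of $D_{l}$ is minimal, and the area distance is $f(p)=\tfrac12\,\mathrm{area}(D_{l(p)})$. It is known that every $p\in D$ is the midpoint of $l(p)$, i.e. $2p=C(u(p))+C(v(p))$. Notation: for plane vectors $X,Y$, $[X,Y]$ is the determinant of the $2\times2$ matrix with columns $X,Y$; $R$ is the counterclockwise rotation by ninety degrees, so $[X,Y]=-X^tRY$. *)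

theory Defs
  imports "HOL-Analysis.Analysis"
begin

definition det2 :: "real^2 \<Rightarrow> real^2 \<Rightarrow> real" where
  "det2 X Y = X$1 * Y$2 - X$2 * Y$1"

text \<open>R: counterclockwise rotation by ninety degrees.\<close>
definition rot90 :: "real^2 \<Rightarrow> real^2" where
  "rot90 X = vector [- X$2, X$1]"

end

theory Submission
  imports Defs
begin

text \<open>Differentiating the midpoint identity \<open>2 p = C(u p) + C(v p)\<close> gives
  \<open>2 h = (\<nabla>u \<bullet> h) C'(u) + (\<nabla>v \<bullet> h) C'(v)\<close> for every direction \<open>h\<close>; since \<open>C'(u)\<close> and
  \<open>C'(v)\<close> are not parallel, Cramer's rule solves this system, with numerators
  \<open>[h, C'(v)] = -R C'(v) \<bullet> h\<close> and \<open>[C'(u), h] = R C'(u) \<bullet> h\<close>. Convexity, regularity and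
  minimality of the chord are needed only to obtain the midpoint property, which is a hypothesis here.\<close>

lemma det2_eq_inner_rot90: "det2 X Y = rot90 X \<bullet> Y"
  by (simp add: det2_def rot90_def inner_vec_def sum_2)

lemma det2_swap: "det2 X Y = - det2 Y X"
  by (simp add: det2_def)

lemma det2_scaleR_left: "det2 (c *\<^sub>R X) Y = c * det2 X Y"
  by (simp add: det2_def algebra_simps)

lemma det2_add_left: "det2 (X + Z) Y = det2 X Y + det2 Z Y"
  by (simp add: det2_def algebra_simps)

lemma det2_self: "det2 X X = 0"
  by (simp add: det2_def)

lemma cramer2:
  assumes sys: "x *\<^sub>R a + y *\<^sub>R b = h" and nz: "det2 a b \<noteq> 0"
  shows "x = - (rot90 b \<bullet> h) / det2 a b" and "y = rot90 a \<bullet> h / det2 a b"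
proof -
  have "det2 h b = x * det2 a b"
    unfolding sys[symmetric] by (simp add: det2_add_left det2_scaleR_left det2_self)
  then show "x = - (rot90 b \<bullet> h) / det2 a b"
    using nz by (simp add: det2_swap[of h] det2_eq_inner_rot90[of b] eq_divide_eq)
  have "det2 a h = y * det2 a b"
    unfolding sys[symmetric] by (simp add: det2_swap[of a] det2_add_left det2_scaleR_left det2_self)
  then show "y = rot90 a \<bullet> h / det2 a b"
    using nz by (simp add: det2_eq_inner_rot90[of a] eq_divide_eq)
qed

lemma has_derivative_curve_comp_open:
  assumes C: "\<And>r. r \<in> I \<Longrightarrow> (C has_vector_derivative dC r) (at r within I)"
    and u: "(u has_derivative u') (at p)"
    and S: "open S" "p \<in> S" "u ` S \<subseteq> I"
  shows "((\<lambda>q. C (u q)) has_derivative (\<lambda>h. u' h *\<^sub>R dC (u p))) (at p)"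
proof -
  have "(C has_derivative (\<lambda>x. x *\<^sub>R dC (u p))) (at (u p) within u ` S)"
    using C[of "u p"] S unfolding has_vector_derivative_def by (auto intro: has_derivative_subset)
  then have "((C \<circ> u) has_derivative (\<lambda>h. u' h *\<^sub>R dC (u p))) (at p within S)"
    using diff_chain_within[OF has_derivative_subset[OF u]] by (simp add: o_def)
  then show ?thesis
    using at_within_open[OF S(2,1)] by (simp add: o_def)
qed

theorem mainTheorem1:
  fixes C dC :: "real \<Rightarrow> real^2" and I :: "real set"
    and K D :: "(real^2) set" and u v :: "real^2 \<Rightarrow> real" and p :: "real^2"
  assumes I_int: "is_interval I" and I_nontriv: "interior I \<noteq> {}"
    and C_deriv: "\<And>r. r \<in> I \<Longrightarrow> (C has_vector_derivative dC r) (at r within I)"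
    and dC_cont: "continuous_on I dC"
    and regular: "\<And>r. r \<in> I \<Longrightarrow> dC r \<noteq> 0"
    and C_inj: "inj_on C I"
    and convex_curve: "convex K" "closed K" "interior K \<noteq> {}" "C ` I \<subseteq> frontier K"
    and no_parallel: "\<And>r s. r \<in> I \<Longrightarrow> s \<in> I \<Longrightarrow> r \<noteq> s \<Longrightarrow> det2 (dC r) (dC s) \<noteq> 0"
    and uv_in: "\<And>q. q \<in> D \<Longrightarrow> u q \<in> I \<and> v q \<in> I \<and> u q \<noteq> v q"
    and midpoint: "\<And>q. q \<in> D \<Longrightarrow> 2 *\<^sub>R q = C (u q) + C (v q)"
    and p_in: "p \<in> interior D"
    and u_diff: "u differentiable (at p)" and v_diff: "v differentiable (at p)"
  shows "(u has_derivative (\<lambda>h. (- (2 / det2 (dC (u p)) (dC (v p)))) *\<^sub>R rot90 (dC (v p)) \<bullet> h)) (at p)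
       \<and> (v has_derivative (\<lambda>h. (2 / det2 (dC (u p)) (dC (v p))) *\<^sub>R rot90 (dC (u p)) \<bullet> h)) (at p)"
proof -
  obtain u' v' where du: "(u has_derivative u') (at p)" and dv: "(v has_derivative v') (at p)"
    using u_diff v_diff unfolding differentiable_def by blast
  let ?a = "dC (u p)" and ?b = "dC (v p)"
  have mid: "C (u q) + C (v q) = 2 *\<^sub>R q" if "q \<in> interior D" for q
    using midpoint that interior_subset by (metis subsetD)
  have pD: "p \<in> D" and I_uv: "u ` interior D \<subseteq> I" "v ` interior D \<subseteq> I"
    using p_in interior_subset uv_in by blast+
  have nz: "det2 ?a ?b \<noteq> 0" using no_parallel uv_in[OF pD] by blast
  have "((\<lambda>q. C (u q) + C (v q)) has_derivative (\<lambda>h. u' h *\<^sub>R ?a + v' h *\<^sub>R ?b)) (at p)"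
    using has_derivative_curve_comp_open[OF C_deriv du] has_derivative_curve_comp_open[OF C_deriv dv]
      I_uv p_in by (intro has_derivative_add) auto
  then have D_uv: "((\<lambda>q. 2 *\<^sub>R q) has_derivative (\<lambda>h. u' h *\<^sub>R ?a + v' h *\<^sub>R ?b)) (at p)"
    by (rule has_derivative_transform_within_open[where s = "interior D" and g = "\<lambda>q. 2 *\<^sub>R q"])
      (use p_in mid in auto)
  have D_id: "((\<lambda>q. 2 *\<^sub>R q) has_derivative (\<lambda>h. 2 *\<^sub>R h)) (at p)"
    by (intro derivative_eq_intros) auto
  have sys: "u' h *\<^sub>R ?a + v' h *\<^sub>R ?b = 2 *\<^sub>R h" for h
    using has_derivative_unique[OF D_uv D_id] by metis
  have "u' = (\<lambda>h. (- (2 / det2 ?a ?b)) *\<^sub>R rot90 ?b \<bullet> h)"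
    using cramer2(1)[OF sys nz] by (intro ext) simp
  moreover have "v' = (\<lambda>h. (2 / det2 ?a ?b) *\<^sub>R rot90 ?a \<bullet> h)"
    using cramer2(2)[OF sys nz] by (intro ext) simp
  ultimately show ?thesis using du dv by simp
qed

end
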